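(* Let $\mathit{VI}$ be a finite set of variables with $\#\mathit{VI}=n$ and $1\le k\le n$. For each $sh\in\mathit{SH}$ and each $V\in\wp(\mathit{VI})$, $\rho_{\mathit{TSD}_k}(sh)\setminus\mathrm{rel}(V,\rho_{\mathit{TSD}_k}(sh))=\rho_{\mathit{TSD}_k}(sh\setminus\mathrm{rel}(V,sh))$.
   Context: $\mathit{SG}=\wp(\mathit{VI})\setminus\{\emptyset\}$, $\mathit{SH}=\wp(\mathit{SG})$. $\rho_{\mathit{TSD}_k}(sh)=\{\,S\in\mathit{SG}\mid \forall T\subseteq S:\ \#T<k\implies S=\bigcup\{U\in sh\mid T\subseteq U\subseteq S\}\,\}$. $\mathrm{rel}(V,sh)=\{S\in sh\mid S\cap V\ne\emptyset\}$. *)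

theory Defs
  imports Main
begin

definition SG :: "'a set \<Rightarrow> 'a set set" where
  "SG VI = Pow VI - {{}}"

definition SH :: "'a set \<Rightarrow> 'a set set set" where
  "SH VI = Pow (SG VI)"

definition rho_TSD :: "'a set \<Rightarrow> nat \<Rightarrow> 'a set set \<Rightarrow> 'a set set" where
  "rho_TSD VI k sh = {S \<in> SG VI. \<forall>T. T \<subseteq> S \<longrightarrow> card T < k \<longrightarrow>
       S = \<Union>{U \<in> sh. T \<subseteq> U \<and> U \<subseteq> S}}"

definition rel :: "'a set \<Rightarrow> 'a set set \<Rightarrow> 'a set set" where
  "rel V sh = {S \<in> sh. S \<inter> V \<noteq> {}}"

end

theory Submission
  imports Defs
begin

(* Whether S belongs to rho_TSD VI k sh depends only on the groups of sh contained in S.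
   If S misses V, removing rel V sh does not change these groups; and for k >= 1 the
   empty T shows that every S in the closure is a union of groups of sh, so the closure
   of sh - rel V sh contains no group meeting V. *)

lemma rel_iff: "S \<in> rel V sh \<longleftrightarrow> S \<in> sh \<and> S \<inter> V \<noteq> {}"
  unfolding rel_def by simp

lemma subgroups_diff_rel:
  assumes "S \<inter> V = {}"
  shows "{U \<in> sh - rel V sh. T \<subseteq> U \<and> U \<subseteq> S} = {U \<in> sh. T \<subseteq> U \<and> U \<subseteq> S}"
  using assms unfolding rel_def by blast

lemma rho_TSD_diff_rel_iff:
  assumes "S \<inter> V = {}"
  shows "S \<in> rho_TSD VI k (sh - rel V sh) \<longleftrightarrow> S \<in> rho_TSD VI k sh"
  unfolding rho_TSD_def using subgroups_diff_rel[OF assms] by simp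

lemma rho_TSD_eq_Union:
  assumes "1 \<le> k" and "S \<in> rho_TSD VI k sh"
  shows "S = \<Union>{U \<in> sh. U \<subseteq> S}"
  using assms unfolding rho_TSD_def by (auto dest: spec[of _ "{}"])

lemma rho_TSD_diff_rel_disjoint:
  assumes "1 \<le> k" and "S \<in> rho_TSD VI k (sh - rel V sh)"
  shows "S \<inter> V = {}"
proof -
  have "S = \<Union>{U \<in> sh - rel V sh. U \<subseteq> S}"
    using rho_TSD_eq_Union[OF assms] .
  then show ?thesis
    unfolding rel_def by blast
qed

theorem lemma3p18:
  fixes VI :: "'a set" and n k :: nat and sh :: "'a set set" and V :: "'a set"
  assumes "finite VI" and "card VI = n" and "1 \<le> k" and "k \<le> n"
    and "sh \<in> SH VI" and "V \<in> Pow VI"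
  shows "rho_TSD VI k sh - rel V (rho_TSD VI k sh) = rho_TSD VI k (sh - rel V sh)"
proof (intro equalityI subsetI)
  fix S
  assume "S \<in> rho_TSD VI k sh - rel V (rho_TSD VI k sh)"
  then have "S \<in> rho_TSD VI k sh" and "S \<inter> V = {}"
    by (auto simp: rel_iff)
  then show "S \<in> rho_TSD VI k (sh - rel V sh)"
    using rho_TSD_diff_rel_iff by metis
next
  fix S
  assume S: "S \<in> rho_TSD VI k (sh - rel V sh)"
  then have disjoint: "S \<inter> V = {}"
    using rho_TSD_diff_rel_disjoint[OF \<open>1 \<le> k\<close>] by blast
  with S show "S \<in> rho_TSD VI k sh - rel V (rho_TSD VI k sh)"
    using rho_TSD_diff_rel_iff[OF disjoint] by (auto simp: rel_iff)
qed

end
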